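(* Multiplication (the ternary relation $w=xy$) is uniformly positive existentially definable: (1) over the language $\{0,1,+,R\}$ in the class $\mathcal{N}=\{\mathfrak{N}_p : p \text{ prime}\}$; (2) over the language $\{0,1,+,\mathrm{pos},R\}$ in the class $\mathcal{Z}=\{\mathfrak{Z}_p : p\text{ prime}\}$; (3) over the language $\{0,1,+,\mid,R,T\}$ in the class $\mathcal{D}=\{\mathfrak{D}_p : p\text{ prime}\}$. That is, in each case there is one positive existential formula $\mu(x,y,w)$ of the given language defining $w=xy$ in every structure of the class.
   Context: For a prime $p$, $x\mid_p y$ on $\mathbb{Z}$ means there exists $s\in\mathbb{Z}$ with $y=\pm x p^s$ (same symbol for its restriction to $\mathbb{N}$; $\mathbb{N}$ contains $0$). $\mathfrak{N}_p=(\mathbb{N};0,1,+,\mid_p)$ with $R$ interpreted as $\mid_p$. $\mathfrak{Z}_p=(\mathbb{Z};0,1,+,\mathrm{pos},\mid_p)$ where the unary relation $\mathrm{pos}(x)$ means $x\geq 0$ and $R$ is $\mid_p$. $\mathfrak{D}_p=(\mathbb{Z};0,1,+,\mid,\mid_p,\mathbb{Z}\smallsetminus\{-1,0,1\})$, where $\mid$ is ordinary divisibility, $R$ is $\mid_p$, and the unary predicate $T$ is interpreted as $\mathbb{Z}\smallsetminus\{-1,0,1\}$. *)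

theory Defs
  imports "HOL-Computational_Algebra.Primes"
begin

datatype tm = Var nat | Zero | One | Plus tm tm

datatype atom = Eq tm tm | RelR tm tm | Pos tm | Divides tm tm | PredT tm

datatype fm = Atom atom | Conj fm fm | Disj fm fm | Ex nat fm

datatype sym = SR | SPos | SDvd | ST

fun atom_syms :: "atom \<Rightarrow> sym set" where
  "atom_syms (Eq _ _) = {}"
| "atom_syms (RelR _ _) = {SR}"
| "atom_syms (Pos _) = {SPos}"
| "atom_syms (Divides _ _) = {SDvd}"
| "atom_syms (PredT _) = {ST}"

fun syms :: "fm \<Rightarrow> sym set" where
  "syms (Atom a) = atom_syms a"
| "syms (Conj f g) = syms f \<union> syms g"
| "syms (Disj f g) = syms f \<union> syms g"
| "syms (Ex _ f) = syms f"

fun eval_tm :: "(nat \<Rightarrow> 'a::{zero,one,plus}) \<Rightarrow> tm \<Rightarrow> 'a" where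
  "eval_tm e (Var n) = e n"
| "eval_tm e Zero = 0"
| "eval_tm e One = 1"
| "eval_tm e (Plus s t) = eval_tm e s + eval_tm e t"

text \<open>A structure is given by interpretations of R, pos, divisibility and T
  on a carrier type with 0, 1, +; the universe is the whole type.\<close>
fun sat_atom :: "('a \<Rightarrow> 'a \<Rightarrow> bool) \<Rightarrow> ('a \<Rightarrow> bool) \<Rightarrow> ('a \<Rightarrow> 'a \<Rightarrow> bool)
      \<Rightarrow> ('a \<Rightarrow> bool) \<Rightarrow> (nat \<Rightarrow> 'a::{zero,one,plus}) \<Rightarrow> atom \<Rightarrow> bool" where
  "sat_atom R P D T e (Eq s t) = (eval_tm e s = eval_tm e t)"
| "sat_atom R P D T e (RelR s t) = R (eval_tm e s) (eval_tm e t)"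
| "sat_atom R P D T e (Pos s) = P (eval_tm e s)"
| "sat_atom R P D T e (Divides s t) = D (eval_tm e s) (eval_tm e t)"
| "sat_atom R P D T e (PredT s) = T (eval_tm e s)"

fun sat :: "('a \<Rightarrow> 'a \<Rightarrow> bool) \<Rightarrow> ('a \<Rightarrow> bool) \<Rightarrow> ('a \<Rightarrow> 'a \<Rightarrow> bool)
      \<Rightarrow> ('a \<Rightarrow> bool) \<Rightarrow> (nat \<Rightarrow> 'a::{zero,one,plus}) \<Rightarrow> fm \<Rightarrow> bool" where
  "sat R P D T e (Atom a) = sat_atom R P D T e a"
| "sat R P D T e (Conj f g) = (sat R P D T e f \<and> sat R P D T e g)"
| "sat R P D T e (Disj f g) = (sat R P D T e f \<or> sat R P D T e g)"
| "sat R P D T e (Ex n f) = (\<exists>v. sat R P D T (e(n := v)) f)"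

text \<open>x |_p y iff y = +-x p^s for some integer s; for negative s this
  means x = +-y p^(-s).\<close>
definition pdvd :: "int \<Rightarrow> int \<Rightarrow> int \<Rightarrow> bool" where
  "pdvd p x y \<longleftrightarrow> (\<exists>k::nat. y = x * p ^ k \<or> y = - (x * p ^ k)
                             \<or> x = y * p ^ k \<or> x = - (y * p ^ k))"

definition pdvd_nat :: "nat \<Rightarrow> nat \<Rightarrow> nat \<Rightarrow> bool" where
  "pdvd_nat p x y \<longleftrightarrow> pdvd (int p) (int x) (int y)"

text \<open>Symbols not in the respective language are interpreted trivially; they
  never occur in formulas of that language.\<close>

definition sat_N :: "nat \<Rightarrow> (nat \<Rightarrow> nat) \<Rightarrow> fm \<Rightarrow> bool" where
  "sat_N p e f = sat (pdvd_nat p) (\<lambda>_. True) (\<lambda>_ _. True) (\<lambda>_. True) e f"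

definition sat_Z :: "nat \<Rightarrow> (nat \<Rightarrow> int) \<Rightarrow> fm \<Rightarrow> bool" where
  "sat_Z p e f = sat (pdvd (int p)) (\<lambda>x. x \<ge> 0) (\<lambda>_ _. True) (\<lambda>_. True) e f"

definition sat_D :: "nat \<Rightarrow> (nat \<Rightarrow> int) \<Rightarrow> fm \<Rightarrow> bool" where
  "sat_D p e f = sat (pdvd (int p)) (\<lambda>_. True) (\<lambda>x y. x dvd y)
                     (\<lambda>x. x \<notin> {-1, 0, 1}) e f"

end

theory Submission
  imports Defs "HOL-Number_Theory.Number_Theory"
begin

text \<open>Multiplication by a power z of p is positive existentially definable from |_p: in
  N_p, w = x z iff x |_p w, x + 1 |_p w + z, x + 2 |_p w + 2 z and x \<le> w; in D_p, divisibility
  together with |_p at several shifts x + c takes over the role of the order. General products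
  are recovered through a geometric series: if W = z^n is another power of p and
  R (z - 1) = W - 1, then R \<equiv> n (mod z - 1), and x R = (x W - x)/(z - 1) only involves
  multiplications by powers of p. Choosing n \<equiv> y gives w \<equiv> x y (mod z - 1), and z is taken
  so large that the congruence is an equality: in N_p by an order bound, in D_p because x, y, w
  divide a number G with 2 G^2 + 1 | z - 1. The structures Z_p reduce to N_p by relativizing
  the quantifiers to pos and treating the signs separately.\<close>

fun fvt :: "tm \<Rightarrow> nat set" where
  "fvt (Var n) = {n}"
| "fvt Zero = {}"
| "fvt One = {}"
| "fvt (Plus s t) = fvt s \<union> fvt t"

fun fva :: "atom \<Rightarrow> nat set" where
  "fva (Eq s t) = fvt s \<union> fvt t"
| "fva (RelR s t) = fvt s \<union> fvt t"
| "fva (Pos s) = fvt s"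
| "fva (Divides s t) = fvt s \<union> fvt t"
| "fva (PredT s) = fvt s"

fun fv :: "fm \<Rightarrow> nat set" where
  "fv (Atom a) = fva a"
| "fv (Conj f g) = fv f \<union> fv g"
| "fv (Disj f g) = fv f \<union> fv g"
| "fv (Ex n f) = fv f - {n}"

lemma eval_tm_upd [simp]: "n \<notin> fvt t \<Longrightarrow> eval_tm (e(n := v)) t = eval_tm e t"
  by (induct t) auto

definition conjs :: "fm list \<Rightarrow> fm" where
  "conjs fs = foldr Conj fs (Atom (Eq Zero Zero))"

lemma sat_conjs [simp]: "sat R P D T e (conjs fs) \<longleftrightarrow> (\<forall>f\<in>set fs. sat R P D T e f)"
  by (induct fs) (auto simp: conjs_def)

lemma syms_conjs [simp]: "syms (conjs fs) = (\<Union>f\<in>set fs. syms f)"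
  by (induct fs) (auto simp: conjs_def)

lemma fv_conjs [simp]: "fv (conjs fs) = (\<Union>f\<in>set fs. fv f)"
  by (induct fs) (auto simp: conjs_def)

lemma sat_N_simps:
  "sat_N p e (Atom a) = sat_atom (pdvd_nat p) (\<lambda>_. True) (\<lambda>_ _. True) (\<lambda>_. True) e a"
  "sat_N p e (Conj f g) = (sat_N p e f \<and> sat_N p e g)"
  "sat_N p e (Disj f g) = (sat_N p e f \<or> sat_N p e g)"
  "sat_N p e (Ex n f) = (\<exists>v. sat_N p (e(n := v)) f)"
  by (simp_all add: sat_N_def)

lemma sat_Z_simps:
  "sat_Z p e (Atom a) = sat_atom (pdvd (int p)) (\<lambda>x. x \<ge> 0) (\<lambda>_ _. True) (\<lambda>_. True) e a"
  "sat_Z p e (Conj f g) = (sat_Z p e f \<and> sat_Z p e g)"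
  "sat_Z p e (Disj f g) = (sat_Z p e f \<or> sat_Z p e g)"
  "sat_Z p e (Ex n f) = (\<exists>v. sat_Z p (e(n := v)) f)"
  by (simp_all add: sat_Z_def)

section \<open>Products modulo z - 1 from geometric series\<close>

lemma dvd_diff_abs_less_imp_eq:
  fixes a b m :: int
  assumes "m dvd a - b" and "\<bar>a - b\<bar> < m"
  shows "a = b"
  using assms dvd_imp_le_int[of "a - b" m] by (cases "a = b") auto

text \<open>R = (z^n - 1)/(z - 1) is congruent to n modulo z - 1; the congruence is stated without
  subtraction (V + t = t z means V = t (z - 1)), as in the formulas below.\<close>
lemma geometric_sum_witness:
  fixes z :: "'a::linordered_semidom"
  assumes "1 \<le> z"
  shows "\<exists>R V t. R * z + 1 = R + z ^ n \<and> R = of_nat n + V \<and> V + t = t * z"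
proof (induction n)
  case 0
  show ?case by (intro exI[of _ 0]) simp
next
  case (Suc n)
  then obtain R V t where IH: "R * z + 1 = R + z ^ n" "R = of_nat n + V" "V + t = t * z"
    by blast
  obtain d where d: "z ^ n = 1 + d"
    using le_add_diff_inverse[OF one_le_power[OF assms, of n]] by metis
  have "(R + z ^ n) * z + 1 = (R * z + 1) + z ^ Suc n"
    by (simp add: algebra_simps)
  also have "\<dots> = (R + z ^ n) + z ^ Suc n"
    using IH(1) by simp
  finally have "(R + z ^ n) * z + 1 = (R + z ^ n) + z ^ Suc n" .
  moreover have "R + z ^ n = of_nat (Suc n) + (V + d)"
    using IH(2) d by (simp add: algebra_simps)
  moreover have "d + R = R * z"
    using IH(1) d by (simp add: add.commute add.left_commute)
  then have "(V + d) + (t + R) = (t + R) * z"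
    using IH(3) by (metis add.assoc add.left_commute distrib_right)
  ultimately show ?case by blast
qed

text \<open>If R (z - 1) = W - 1 and Q (z - 1) = x (W - 1), then Q = x R; so w \<equiv> Q = x R \<equiv> x y
  modulo z - 1.\<close>
lemma product_cong_from_geometric:
  fixes z :: "'a::idom"
  assumes "z \<noteq> 1"
    and "R * z + 1 = R + W" and "Q * z + x = Q + x * W"
    and "R = y + V" and "V + t = t * z"
    and "Q = w + V'" and "V' + s = s * z"
  shows "(z - 1) dvd (w - x * y)"
proof -
  have "(z - 1) * (Q - x * R) = (Q * z + x) - x * (R * z + 1) - Q + x * R"
    by (simp add: algebra_simps)
  also have "\<dots> = 0"
    using assms(2,3) by (simp add: algebra_simps)
  finally have "Q = x * R"
    using assms(1) by simp
  moreover have "V = t * (z - 1)" "V' = s * (z - 1)"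
    using assms(5,7) by (simp_all add: algebra_simps)
  ultimately have "w - x * y = (z - 1) * (x * t - s)"
    using assms(4,6) by (simp add: algebra_simps)
  then show ?thesis by simp
qed

section \<open>Multiplication in N_p\<close>

lemma pdvd_nat_iff: "pdvd_nat p a b \<longleftrightarrow> (\<exists>k. b = a * p ^ k \<or> a = b * p ^ k)"
proof -
  have "int a = - int b \<longleftrightarrow> a = 0 \<and> b = 0" for a b by arith
  then show ?thesis
    unfolding pdvd_nat_def pdvd_def by (auto simp flip: of_nat_mult of_nat_power)
qed

lemma pdvd_nat_one_iff: "pdvd_nat p u 1 \<longleftrightarrow> (\<exists>k. u = p ^ k)"
  unfolding pdvd_nat_iff by (metis mult_1 mult_is_0 nat_mult_eq_1_iff power_0 zero_neq_one)

lemma pdvd_nat_le_imp_eq_mult_power: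
  assumes "pdvd_nat p a b" and "a \<le> b" and "0 < p"
  shows "\<exists>k. b = a * p ^ k"
proof -
  obtain k where "b = a * p ^ k \<or> a = b * p ^ k"
    using assms(1) pdvd_nat_iff by auto
  moreover have "b \<le> b * p ^ k"
    using assms(3) by simp
  then have "a = b * p ^ k \<Longrightarrow> b = a * p ^ 0"
    using assms(2) by (metis le_antisym mult.right_neutral power_0)
  ultimately show ?thesis by blast
qed

lemma mult_power_add_power_eq_imp:
  fixes p x a b k :: nat
  assumes p: "prime p" and x: "1 \<le> x" and eq: "x * p ^ a + p ^ k = (x + 1) * p ^ b"
  shows "a = k \<or> p dvd x"
proof -
  have p1: "1 < p" using p prime_gt_1_nat by auto
  consider "a = b" | "b < a" | "a < b" by linarith
  then show ?thesis
  proof cases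
    case 1
    then have "p ^ k = p ^ b" using eq by (simp add: algebra_simps)
    then show ?thesis using 1 p1 by simp
  next
    case 2
    have "x * p ^ b < x * p ^ a"
      using p1 x 2 by (simp add: power_strict_increasing)
    moreover have "x * p ^ a + p ^ k = x * p ^ b + p ^ b"
      using eq by (simp add: algebra_simps)
    ultimately have "p ^ k < p ^ b"
      by linarith
    then have "k < b"
      using p1 power_less_imp_less_exp by blast
    have "p ^ b dvd x * p ^ a + p ^ k"
      unfolding eq by simp
    moreover have "p ^ b dvd x * p ^ a"
      using 2 by (simp add: le_imp_power_dvd)
    ultimately have "b \<le> k"
      using p1 by (simp add: dvd_add_right_iff power_dvd_imp_le)
    with \<open>k < b\<close> show ?thesis by simp
  next
    case 3
    have "p ^ a dvd x * p ^ a + p ^ k"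
      unfolding eq using 3 by (simp add: le_imp_power_dvd)
    then have "a \<le> k"
      using p1 by (simp add: dvd_add_right_iff power_dvd_imp_le)
    show ?thesis
    proof (cases "a = k")
      case False
      with \<open>a \<le> k\<close> have "p ^ a * (x + p ^ (k - a)) = p ^ a * ((x + 1) * p ^ (b - a))"
        using eq 3 by (simp add: algebra_simps flip: power_add)
      then have "x + p ^ (k - a) = (x + 1) * p ^ (b - a)"
        using p1 by simp
      moreover have "p dvd (x + 1) * p ^ (b - a)" "p dvd p ^ (k - a)"
        using 3 False \<open>a \<le> k\<close> by simp_all
      ultimately show ?thesis
        by (metis dvd_add_left_iff)
    qed simp
  qed
qed

definition times_power_N :: "nat \<Rightarrow> nat \<Rightarrow> nat \<Rightarrow> nat \<Rightarrow> bool" where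
  "times_power_N p x z w \<longleftrightarrow>
     pdvd_nat p x w \<and> pdvd_nat p (x + 1) (w + z) \<and> pdvd_nat p (x + 2) (w + 2 * z) \<and> x \<le> w"

text \<open>Writing w = x p^a, w + z = (x+1) p^b and w + 2z = (x+2) p^c, the two consecutive
  equations give a = k or p | x, and b = k or p | x + 1; and b = k forces a = k.\<close>
lemma times_power_N_iff:
  assumes p: "prime p" and z: "z = p ^ k"
  shows "times_power_N p x z w \<longleftrightarrow> w = x * z"
proof
  have p0: "0 < p" using p prime_gt_0_nat by blast
  then have "1 \<le> z" using z by simp
  assume h: "times_power_N p x z w"
  then have le: "x \<le> w" "x + 1 \<le> w + z" "x + 2 \<le> w + 2 * z"
    using \<open>1 \<le> z\<close> unfolding times_power_N_def by linarith+
  show "w = x * z"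
  proof (cases "x = 0")
    case True
    then show ?thesis using h p0 by (auto simp: times_power_N_def pdvd_nat_iff)
  next
    case False
    obtain a where a: "w = x * p ^ a"
      using h le(1) p0 pdvd_nat_le_imp_eq_mult_power unfolding times_power_N_def by blast
    obtain b where b: "w + z = (x + 1) * p ^ b"
      using h le(2) p0 pdvd_nat_le_imp_eq_mult_power unfolding times_power_N_def by blast
    obtain c where c: "w + 2 * z = (x + 2) * p ^ c"
      using h le(3) p0 pdvd_nat_le_imp_eq_mult_power unfolding times_power_N_def by blast
    have "a = k \<or> p dvd x"
      using mult_power_add_power_eq_imp[OF p, of x a k b] False a b z by simp
    moreover have "b = k \<or> p dvd x + 1"
      using mult_power_add_power_eq_imp[OF p, of "x + 1" b k c] b c z by (simp add: algebra_simps)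
    moreover have "b = k \<Longrightarrow> a = k"
      using a b z False prime_gt_1_nat[OF p] by (simp add: algebra_simps)
    moreover have "\<not> (p dvd x \<and> p dvd x + 1)"
      using p by (metis dvd_add_right_iff nat_dvd_1_iff_1 not_prime_1)
    ultimately show ?thesis using a z by blast
  qed
next
  assume "w = x * z"
  moreover have "1 \<le> z"
    using z p prime_gt_0_nat by (simp add: Suc_leI)
  ultimately show "times_power_N p x z w"
    unfolding times_power_N_def pdvd_nat_iff z
    by (intro conjI exI[of _ k] disjI1) (simp_all add: algebra_simps)
qed

definition times_power_fm_N :: "tm \<Rightarrow> tm \<Rightarrow> tm \<Rightarrow> nat \<Rightarrow> fm" where
  "times_power_fm_N x z w d = conjs
     [Atom (RelR x w), Atom (RelR (Plus x One) (Plus w z)),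
      Atom (RelR (Plus (Plus x One) One) (Plus (Plus w z) z)),
      Ex d (Atom (Eq w (Plus x (Var d))))]"

lemma sat_times_power_fm_N [simp]:
  "d \<notin> fvt x \<Longrightarrow> d \<notin> fvt w \<Longrightarrow>
   sat_N p e (times_power_fm_N x z w d) \<longleftrightarrow> times_power_N p (eval_tm e x) (eval_tm e z) (eval_tm e w)"
  by (simp add: sat_N_def times_power_fm_N_def times_power_N_def le_iff_add add.assoc mult_2)

lemma syms_times_power_fm_N [simp]: "syms (times_power_fm_N x z w d) = {SR}"
  by (simp add: times_power_fm_N_def)

lemma fv_times_power_fm_N:
  "fv (times_power_fm_N x z w d) = fvt x \<union> fvt z \<union> fvt w \<union> (fvt w \<union> fvt x - {d})"
  by (auto simp: times_power_fm_N_def)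

text \<open>Since u \<ge> x + y + 2, the power z = u^2 of p exceeds x y + 1; together with w + 2 \<le> z
  this makes the congruence w \<equiv> x y (mod z - 1) an equality.\<close>
definition mult_body_N :: fm where
  "mult_body_N =
    (let x = Var 0; y = Var 1; w = Var 2; u = Var 3; a = Var 4; z = Var 5; W = Var 6; R = Var 7;
         U = Var 8; t = Var 9; V = Var 10; Q = Var 11; Qz = Var 12; xW = Var 13; V' = Var 14;
         s = Var 15; c = Var 16; M = (\<lambda>x z w. times_power_fm_N x z w 17)
     in conjs
         [Atom (RelR u One), Atom (Eq u (Plus (Plus (Plus (Plus x y) One) One) a)), M u u z,
          Atom (RelR W One), M R z U, Atom (Eq (Plus U One) (Plus R W)),
          Atom (Eq R (Plus y V)), M t z (Plus V t),
          M Q z Qz, M x W xW, Atom (Eq (Plus Qz x) (Plus Q xW)),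
          Atom (Eq Q (Plus w V')), M s z (Plus V' s),
          Atom (Eq (Plus (Plus (Plus w One) One) c) z)])"

definition mult_fm_N :: fm where
  "mult_fm_N = Ex 3 (Ex 4 (Ex 5 (Ex 6 (Ex 7 (Ex 8 (Ex 9 (Ex 10 (Ex 11 (Ex 12 (Ex 13 (Ex 14
     (Ex 15 (Ex 16 mult_body_N)))))))))))))"

lemma sat_mult_body_N:
  "sat_N p (e(3 := u, 4 := a, 5 := z, 6 := W, 7 := R, 8 := U, 9 := t, 10 := V, 11 := Q,
      12 := Qz, 13 := xW, 14 := V', 15 := s, 16 := c)) mult_body_N \<longleftrightarrow>
     pdvd_nat p u 1 \<and> u = e 0 + e 1 + 2 + a \<and> times_power_N p u u z \<and>
     pdvd_nat p W 1 \<and> times_power_N p R z U \<and> U + 1 = R + W \<and>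
     R = e 1 + V \<and> times_power_N p t z (V + t) \<and>
     times_power_N p Q z Qz \<and> times_power_N p (e 0) W xW \<and> Qz + e 0 = Q + xW \<and>
     Q = e 2 + V' \<and> times_power_N p s z (V' + s) \<and> e 2 + 2 + c = z"
  unfolding mult_body_N_def Let_def
  by (simp add: sat_N_def add.assoc sat_times_power_fm_N[unfolded sat_N_def])

lemma sat_mult_fm_N:
  "sat_N p e mult_fm_N \<longleftrightarrow>
    (\<exists>u a z W R U t V Q Qz xW V' s c.
       pdvd_nat p u 1 \<and> u = e 0 + e 1 + 2 + a \<and> times_power_N p u u z \<and>
       pdvd_nat p W 1 \<and> times_power_N p R z U \<and> U + 1 = R + W \<and>
       R = e 1 + V \<and> times_power_N p t z (V + t) \<and>
       times_power_N p Q z Qz \<and> times_power_N p (e 0) W xW \<and> Qz + e 0 = Q + xW \<and>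
       Q = e 2 + V' \<and> times_power_N p s z (V' + s) \<and> e 2 + 2 + c = z)"
  unfolding mult_fm_N_def by (simp only: sat_N_simps sat_mult_body_N)

lemma syms_mult_fm_N: "syms mult_fm_N \<subseteq> {SR}"
  unfolding mult_fm_N_def mult_body_N_def Let_def
  by (simp only: syms.simps syms_conjs syms_times_power_fm_N atom_syms.simps list.set) auto

lemma fv_mult_body_N: "fv mult_body_N \<subseteq> {..16}"
  unfolding mult_body_N_def Let_def
  by (simp only: fv_conjs fv.simps fva.simps fvt.simps list.set) (auto simp: fv_times_power_fm_N)

lemma fv_mult_fm_N: "fv mult_fm_N \<subseteq> {0, 1, 2}"
proof
  fix x assume "x \<in> fv mult_fm_N"
  then have "x \<in> fv mult_body_N" "x \<notin> {3, 4, 5, 6, 7, 8, 9, 10, 11, 12, 13, 14, 15, 16}"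
    by (auto simp: mult_fm_N_def)
  with fv_mult_body_N have "x \<le> 16" "x \<notin> {3, 4, 5, 6, 7, 8, 9, 10, 11, 12, 13, 14, 15, 16}"
    by auto
  then show "x \<in> {0, 1, 2}"
    by simp presburger
qed

lemma mult_fm_N_sound:
  assumes p: "prime p" and sat: "sat_N p e mult_fm_N"
  shows "e 2 = e 0 * e 1"
proof -
  define x y w where "x = e 0" and "y = e 1" and "w = e 2"
  obtain u a z W R U t V Q Qz xW V' s c
    where u: "pdvd_nat p u 1" "u = x + y + 2 + a" and z: "times_power_N p u u z"
      and W: "pdvd_nat p W 1" and U: "times_power_N p R z U" "U + 1 = R + W"
      and V: "R = y + V" "times_power_N p t z (V + t)"
      and Q: "times_power_N p Q z Qz" "times_power_N p x W xW" "Qz + x = Q + xW"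
      and V': "Q = w + V'" "times_power_N p s z (V' + s)"
      and c: "w + 2 + c = z"
    using sat unfolding sat_mult_fm_N x_def y_def w_def by blast
  obtain j where j: "u = p ^ j"
    using u(1) pdvd_nat_one_iff by blast
  have zu: "z = u * u"
    using z times_power_N_iff[OF p j] by blast
  then have zj: "z = p ^ (j + j)"
    using j by (simp add: power_add)
  obtain m where m: "W = p ^ m"
    using W pdvd_nat_one_iff by blast
  have "U = R * z" "Qz = Q * z" "V + t = t * z" "V' + s = s * z"
    using U(1) Q(1) V(2) V'(2) times_power_N_iff[OF p zj] by blast+
  moreover have "xW = x * W"
    using Q(2) times_power_N_iff[OF p m] by blast
  ultimately have "R * z + 1 = R + W" "Q * z + x = Q + x * W" "V + t = t * z" "V' + s = s * z"
    using U(2) Q(3) by simp_all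
  then have "int R * int z + 1 = int R + int W" "int Q * int z + int x = int Q + int x * int W"
    "int V + int t = int t * int z" "int V' + int s = int s * int z"
    by (metis of_nat_add of_nat_mult of_nat_1)+
  moreover have "2 \<le> z"
    unfolding zu using u(2) mult_le_mono[of 2 u 1 u] by simp
  ultimately have cong: "int z - 1 dvd int w - int x * int y"
    using V(1) V'(1)
    by (intro product_cong_from_geometric[where R = "int R" and W = "int W" and Q = "int Q"
          and V = "int V" and t = "int t" and V' = "int V'" and s = "int s"]) simp_all
  have "x * y + 2 \<le> (x + y + 2) * (x + y + 2)"
    by (simp add: algebra_simps)
  also have "\<dots> \<le> z"
    unfolding zu u(2) by (intro mult_le_mono) simp_all
  finally have "int (x * y) + 2 \<le> int z"
    by linarith
  moreover have "0 \<le> int (x * y)"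
    by simp
  ultimately have "\<bar>int w - int (x * y)\<bar> < int z - 1"
    unfolding abs_less_iff using c by linarith
  then have "int w = int (x * y)"
    using cong by (intro dvd_diff_abs_less_imp_eq[of "int z - 1"]) simp_all
  then show ?thesis
    unfolding x_def y_def w_def by (simp only: of_nat_eq_iff)
qed

lemma mult_fm_N_complete:
  assumes p: "prime p" and e: "e 2 = e 0 * e 1"
  shows "sat_N p e mult_fm_N"
proof -
  define x y j where "x = e 0" and "y = e 1" and "j = x + y + 2"
  define u z W where "u = p ^ j" and "z = u * u" and "W = z ^ y"
  have "j < 2 ^ j"
    by (rule less_exp)
  also have "\<dots> \<le> u"
    unfolding u_def using prime_ge_2_nat[OF p] by (rule power_mono) simp
  finally have ju: "j \<le> u"
    by (rule less_imp_le)
  have zj: "z = p ^ (j + j)" and Wj: "W = p ^ ((j + j) * y)"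
    unfolding W_def z_def u_def by (simp_all add: power_add power_mult)
  have "x * y + 2 \<le> j * j"
    unfolding j_def by (simp add: algebra_simps)
  also have "\<dots> \<le> z"
    unfolding z_def using ju ju by (rule mult_le_mono)
  finally have "x * y + 2 \<le> z" .
  then obtain R V t where geo: "R * z + 1 = R + W" "R = y + V" "V + t = t * z"
    using geometric_sum_witness[of z y] unfolding W_def by auto
  have "x * R * z + x = x * R + x * W"
    using arg_cong[OF geo(1), of "\<lambda>n. x * n"] by (simp add: algebra_simps)
  moreover have "x * R = x * y + x * V"
    using geo(2) by (simp add: algebra_simps)
  moreover have "x * V + x * t = x * t * z"
    using arg_cong[OF geo(3), of "\<lambda>n. x * n"] by (simp add: algebra_simps)
  moreover have "u * u = z" "pdvd_nat p u 1" "pdvd_nat p W 1"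
    using z_def u_def Wj pdvd_nat_one_iff by auto
  moreover have "x + y + 2 + (u - j) = u" "x * y + 2 + (z - (x * y + 2)) = z"
    using ju \<open>x * y + 2 \<le> z\<close> unfolding j_def by simp_all
  ultimately have "pdvd_nat p u 1 \<and> u = x + y + 2 + (u - j) \<and> times_power_N p u u z \<and>
     pdvd_nat p W 1 \<and> times_power_N p R z (R * z) \<and> R * z + 1 = R + W \<and>
     R = y + V \<and> times_power_N p t z (V + t) \<and>
     times_power_N p (x * R) z (x * R * z) \<and> times_power_N p x W (x * W) \<and>
     x * R * z + x = x * R + x * W \<and>
     x * R = x * y + x * V \<and> times_power_N p (x * t) z (x * V + x * t) \<and>
     x * y + 2 + (z - (x * y + 2)) = z"
    using geo
    by (simp add: times_power_N_iff[OF p u_def] times_power_N_iff[OF p zj]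
        times_power_N_iff[OF p Wj])
  then show ?thesis
    unfolding sat_mult_fm_N e x_def[symmetric] y_def[symmetric] by blast
qed

section \<open>Multiplication in Z_p\<close>

fun relativize_pos :: "fm \<Rightarrow> fm" where
  "relativize_pos (Atom a) = Atom a"
| "relativize_pos (Conj f g) = Conj (relativize_pos f) (relativize_pos g)"
| "relativize_pos (Disj f g) = Disj (relativize_pos f) (relativize_pos g)"
| "relativize_pos (Ex n f) = Ex n (Conj (Atom (Pos (Var n))) (relativize_pos f))"

lemma syms_relativize_pos: "syms (relativize_pos f) \<subseteq> syms f \<union> {SPos}"
  by (induct f) auto

lemma eval_tm_nat:
  "\<forall>i\<in>fvt t. 0 \<le> e i \<Longrightarrow> eval_tm e t = int (eval_tm (\<lambda>i. nat (e i)) t)"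
  by (induct t) auto

lemma sat_relativize_pos:
  "\<forall>i\<in>fv f. 0 \<le> e i \<Longrightarrow> sat_Z p e (relativize_pos f) \<longleftrightarrow> sat_N p (\<lambda>i. nat (e i)) f"
proof (induct f arbitrary: e)
  case (Atom a)
  then show ?case
    by (cases a) (auto simp: sat_Z_simps sat_N_simps pdvd_nat_def eval_tm_nat[of _ e])
next
  case (Ex n f)
  have "sat_Z p (e(n := int v)) (relativize_pos f) \<longleftrightarrow> sat_N p ((\<lambda>i. nat (e i))(n := v)) f"
    for v
  proof -
    have "\<forall>i\<in>fv f. 0 \<le> (e(n := int v)) i"
      using Ex.prems by auto
    then have "sat_Z p (e(n := int v)) (relativize_pos f) \<longleftrightarrow>
        sat_N p (\<lambda>i. nat ((e(n := int v)) i)) f"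
      by (rule Ex.hyps)
    also have "(\<lambda>i. nat ((e(n := int v)) i)) = (\<lambda>i. nat (e i))(n := v)"
      by auto
    finally show ?thesis .
  qed
  moreover have "(\<exists>v::int. 0 \<le> v \<and> P v) \<longleftrightarrow> (\<exists>v. P (int v))" for P
    by (metis nonneg_int_cases of_nat_0_le_iff)
  ultimately show ?case
    by (simp add: sat_Z_simps sat_N_simps)
qed (simp_all add: sat_Z_simps sat_N_simps)

lemma sat_Z_relativize_mult_fm_N:
  assumes "prime p" and "0 \<le> e 0" "0 \<le> e 1" "0 \<le> e 2"
  shows "sat_Z p e (relativize_pos mult_fm_N) \<longleftrightarrow> e 2 = e 0 * e 1"
proof -
  have "sat_Z p e (relativize_pos mult_fm_N) \<longleftrightarrow> sat_N p (\<lambda>i. nat (e i)) mult_fm_N"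
    using fv_mult_fm_N assms(2-4) by (intro sat_relativize_pos) auto
  also have "\<dots> \<longleftrightarrow> nat (e 2) = nat (e 0) * nat (e 1)"
    using mult_fm_N_sound[OF assms(1), of "\<lambda>i. nat (e i)"]
      mult_fm_N_complete[OF assms(1), of "\<lambda>i. nat (e i)"] by auto
  also have "\<dots> \<longleftrightarrow> e 2 = e 0 * e 1"
    using assms(2-4) by (metis nat_mult_distrib int_nat_eq nat_eq_iff2 zero_le_mult_iff)
  finally show ?thesis .
qed

text \<open>x, y, w are saved in the variables 3, 4, 5, so that 0, 1, 2 can be rebound to
  \<bar>x\<bar>, \<bar>y\<bar>, \<bar>w\<bar> for the relativized formula.\<close>
definition mult_fm_Z :: fm where
  "mult_fm_Z =
    (let x = Var 3; y = Var 4; w = Var 5; a = Var 0; c = Var 1; m = Var 2;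
         neg = (\<lambda>s t. Atom (Eq (Plus s t) Zero)); eq = (\<lambda>s t. Atom (Eq s t))
     in Ex 3 (Ex 4 (Ex 5 (conjs [eq x (Var 0), eq y (Var 1), eq w (Var 2),
       Ex 0 (Ex 1 (Ex 2 (conjs
         [Atom (Pos a), Atom (Pos c), Atom (Pos m),
          Disj (conjs [eq x a, eq y c, eq w m])
           (Disj (conjs [neg x a, eq y c, neg w m])
             (Disj (conjs [eq x a, neg y c, neg w m])
               (conjs [neg x a, neg y c, eq w m]))),
          relativize_pos mult_fm_N])))]))))"

lemma sat_mult_fm_Z:
  "sat_Z p e mult_fm_Z \<longleftrightarrow>
    (\<exists>a c m. 0 \<le> a \<and> 0 \<le> c \<and> 0 \<le> m \<and>
      ((e 0 = a \<and> e 1 = c \<and> e 2 = m) \<or> (e 0 + a = 0 \<and> e 1 = c \<and> e 2 + m = 0) \<or>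
       (e 0 = a \<and> e 1 + c = 0 \<and> e 2 + m = 0) \<or> (e 0 + a = 0 \<and> e 1 + c = 0 \<and> e 2 = m)) \<and>
      sat_Z p (e(3 := e 0, 4 := e 1, 5 := e 2, 0 := a, 1 := c, 2 := m)) (relativize_pos mult_fm_N))"
  unfolding mult_fm_Z_def Let_def by (simp add: sat_Z_def del: relativize_pos.simps)

lemma mult_fm_Z_correct:
  assumes p: "prime p"
  shows "sat_Z p e mult_fm_Z \<longleftrightarrow> e 2 = e 0 * e 1"
proof -
  have "sat_Z p e mult_fm_Z \<longleftrightarrow>
    (\<exists>a c m. 0 \<le> a \<and> 0 \<le> c \<and> 0 \<le> m \<and>
      ((e 0 = a \<and> e 1 = c \<and> e 2 = m) \<or> (e 0 + a = 0 \<and> e 1 = c \<and> e 2 + m = 0) \<or>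
       (e 0 = a \<and> e 1 + c = 0 \<and> e 2 + m = 0) \<or> (e 0 + a = 0 \<and> e 1 + c = 0 \<and> e 2 = m)) \<and>
      m = a * c)"
    unfolding sat_mult_fm_Z using sat_Z_relativize_mult_fm_N[OF p]
    by (intro ex_cong1 conj_cong refl) auto
  also have "\<dots> \<longleftrightarrow> e 2 = e 0 * e 1"
  proof
    assume "e 2 = e 0 * e 1"
    then show "\<exists>a c m. 0 \<le> a \<and> 0 \<le> c \<and> 0 \<le> m \<and>
      ((e 0 = a \<and> e 1 = c \<and> e 2 = m) \<or> (e 0 + a = 0 \<and> e 1 = c \<and> e 2 + m = 0) \<or>
       (e 0 = a \<and> e 1 + c = 0 \<and> e 2 + m = 0) \<or> (e 0 + a = 0 \<and> e 1 + c = 0 \<and> e 2 = m)) \<and>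
      m = a * c"
      by (intro exI[of _ "\<bar>e 0\<bar>"] exI[of _ "\<bar>e 1\<bar>"] exI[of _ "\<bar>e 0\<bar> * \<bar>e 1\<bar>"])
         (auto simp: abs_if)
  qed (auto simp: algebra_simps eq_neg_iff_add_eq_0[symmetric])
  finally show ?thesis .
qed

lemma syms_mult_fm_Z: "syms mult_fm_Z \<subseteq> {SPos, SR}"
  using syms_relativize_pos[of mult_fm_N] syms_mult_fm_N
  unfolding mult_fm_Z_def Let_def by auto

definition signed_ppower :: "nat \<Rightarrow> int \<Rightarrow> bool" where
  "signed_ppower p u \<longleftrightarrow> (\<exists>k. \<bar>u\<bar> = int p ^ k)"

lemma signed_ppower_power [simp]: "signed_ppower p (int p ^ k)"
  by (auto simp: signed_ppower_def)

lemma signed_ppower_mult: "signed_ppower p a \<Longrightarrow> signed_ppower p b \<Longrightarrow> signed_ppower p (a * b)"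
  unfolding signed_ppower_def by (metis abs_mult power_add)

lemma signed_ppower_nonzero: "prime p \<Longrightarrow> signed_ppower p a \<Longrightarrow> a \<noteq> 0"
  unfolding signed_ppower_def using prime_gt_0_nat by fastforce

lemma pdvd_iff_abs: "pdvd q x y \<longleftrightarrow> (\<exists>k. \<bar>y\<bar> = \<bar>x * q ^ k\<bar> \<or> \<bar>x\<bar> = \<bar>y * q ^ k\<bar>)"
  unfolding pdvd_def abs_eq_iff by blast

lemma pdvd_quotient_signed_ppower:
  assumes p: "prime p" and n: "n \<noteq> 0" and "n dvd m" and "pdvd (int p) n m"
  shows "signed_ppower p (m div n)"
proof -
  define r where "r = m div n"
  have m: "\<bar>m\<bar> = \<bar>r\<bar> * \<bar>n\<bar>"
    using \<open>n dvd m\<close> unfolding r_def by (metis abs_mult dvd_div_mult_self)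
  obtain k where "\<bar>m\<bar> = \<bar>n\<bar> * int p ^ k \<or> \<bar>n\<bar> = \<bar>m\<bar> * int p ^ k"
    using assms(4) unfolding pdvd_iff_abs by (auto simp: abs_mult)
  then have "\<bar>r\<bar> = int p ^ k \<or> \<bar>r\<bar> * int p ^ k = 1"
    using n unfolding m by (auto simp: algebra_simps)
  then have "\<bar>r\<bar> = int p ^ k \<or> \<bar>r\<bar> = int p ^ 0"
    using zmult_eq_1_iff[of "\<bar>r\<bar>" "int p ^ k"] by auto
  then show ?thesis
    unfolding signed_ppower_def r_def by blast
qed

lemma pdvd_one_iff: "prime p \<Longrightarrow> pdvd (int p) u 1 \<longleftrightarrow> signed_ppower p u"
  using pdvd_quotient_signed_ppower[of p 1 u]
  by (auto simp: signed_ppower_def pdvd_iff_abs abs_mult)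

lemma signed_ppower_dvd_mult_coprime:
  assumes p: "prime p" and z: "signed_ppower p z" and r: "signed_ppower p r"
    and "z dvd r * n" and "\<not> int p dvd n"
  shows "z dvd r \<and> signed_ppower p (r div z)"
proof -
  obtain k e where k: "\<bar>z\<bar> = int p ^ k" and e: "\<bar>r\<bar> = int p ^ e"
    using z r unfolding signed_ppower_def by blast
  have "int p ^ k dvd z"
    unfolding k[symmetric] by simp
  also have "z dvd r * n" by fact
  also have "r * n dvd int p ^ e * n"
    unfolding e[symmetric] by (intro mult_dvd_mono) simp_all
  finally have "int p ^ k dvd int p ^ e * n" .
  moreover have "prime (int p)"
    using p by simp
  then have "coprime (int p) n"
    using assms(5) by (rule prime_imp_coprime)
  then have "coprime (int p ^ k) n"
    by simp
  ultimately have "int p ^ k dvd int p ^ e"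
    using coprime_dvd_mult_left_iff by blast
  then have "k \<le> e"
    using prime_gt_1_nat[OF p] by (simp add: power_dvd_imp_le flip: of_nat_power)
  then have r: "\<bar>r\<bar> = \<bar>z\<bar> * int p ^ (e - k)"
    using k e by (simp flip: power_add)
  then have "\<bar>z\<bar> dvd \<bar>r\<bar>"
    by simp
  then have "z dvd r"
    by simp
  then have "\<bar>r\<bar> = \<bar>z\<bar> * \<bar>r div z\<bar>"
    by (metis abs_mult dvd_mult_div_cancel)
  then have "\<bar>r div z\<bar> = int p ^ (e - k)"
    using r signed_ppower_nonzero[OF p z] by simp
  with \<open>z dvd r\<close> show ?thesis
    unfolding signed_ppower_def by blast
qed

lemma not_dvd_consecutive:
  assumes "prime p"
  shows "\<not> (int p dvd a \<and> int p dvd a + 1)"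
proof
  assume "int p dvd a \<and> int p dvd a + 1"
  then have "int p dvd 1"
    using dvd_add_right_iff by blast
  then show False
    using assms by (simp add: prime_nat_iff)
qed

lemma ppower_le_twice_dist:
  assumes "2 \<le> q" and "m \<noteq> n"
  shows "(q::int) ^ n \<le> 2 * \<bar>q ^ m - q ^ n\<bar>"
proof (cases "m < n")
  case True
  then have "q ^ m * 2 \<le> q ^ m * q ^ (n - m)"
    using assms(1) by (intro mult_left_mono) (auto intro: order.trans[OF _ self_le_power])
  moreover have "0 \<le> q ^ m"
    using assms(1) by simp
  ultimately show ?thesis
    using True abs_ge_minus_self[of "q ^ m - q ^ n"] by (simp flip: power_add)
next
  case False
  then have "q ^ n * 2 \<le> q ^ n * q ^ (m - n)"
    using assms by (intro mult_left_mono) (auto intro: order.trans[OF _ self_le_power])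
  moreover have "0 \<le> q ^ n"
    using assms(1) by simp
  ultimately show ?thesis
    using False abs_ge_self[of "q ^ m - q ^ n"] by (simp flip: power_add)
qed

lemma signed_ppower_dist:
  assumes p: "prime p" and t: "signed_ppower p t" and t': "signed_ppower p t'" and "t \<noteq> t'"
  shows "\<bar>t' - 1\<bar> \<le> 3 * \<bar>t - t'\<bar>"
proof -
  obtain a b where a: "\<bar>t\<bar> = int p ^ a" and b: "\<bar>t'\<bar> = int p ^ b"
    using t t' unfolding signed_ppower_def by blast
  have "\<bar>t'\<bar> \<le> 2 * \<bar>t - t'\<bar>"
  proof (cases "a = b")
    case True
    then have "t = - t'"
      using a b \<open>t \<noteq> t'\<close> by (auto simp: abs_eq_iff)
    then show ?thesis by simp
  next
    case False
    then have "\<bar>t'\<bar> \<le> 2 * \<bar>\<bar>t\<bar> - \<bar>t'\<bar>\<bar>"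
      unfolding a b using prime_ge_2_nat[OF p] by (intro ppower_le_twice_dist) simp_all
    also have "\<dots> \<le> 2 * \<bar>t - t'\<bar>"
      by (simp add: abs_triangle_ineq3)
    finally show ?thesis .
  qed
  moreover have "1 \<le> \<bar>t - t'\<bar>"
    using \<open>t \<noteq> t'\<close> by simp
  ultimately show ?thesis
    using abs_triangle_ineq4[of t' 1] by simp
qed

text \<open>Write w + j z = r (x + j) with r = \<plusminus>p^e; as p does not divide x + j, z divides r,
  and t = r / z.\<close>
lemma shifted_product_deviation:
  assumes p: "prime p" and z: "signed_ppower p z" and "z dvd w"
    and "x + j \<noteq> 0" and "\<not> int p dvd x + j"
    and "(x + j) dvd (w + j * z)" and "pdvd (int p) (x + j) (w + j * z)"
  shows "\<exists>t. signed_ppower p t \<and> w - x * z = z * (t - 1) * (x + j)"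
proof -
  define r where "r = (w + j * z) div (x + j)"
  have r: "signed_ppower p r" "w + j * z = r * (x + j)"
    using pdvd_quotient_signed_ppower[OF p assms(4,6,7)] assms(6) unfolding r_def by simp_all
  have "z dvd r * (x + j)"
    using \<open>z dvd w\<close> unfolding r(2)[symmetric] by simp
  then have "z dvd r" "signed_ppower p (r div z)"
    using signed_ppower_dvd_mult_coprime[OF p z r(1)] assms(5) by blast+
  then have "w - x * z = z * (r div z - 1) * (x + j)"
    using r(2) by (simp add: algebra_simps)
  then show ?thesis
    using \<open>signed_ppower p (r div z)\<close> by blast
qed

text \<open>Two of the shifts x + i are prime to p; comparing the two resulting expressions for
  w - x z forces the p-power quotients to be close, which is impossible for large x unless
  w = x z.\<close>
lemma eq_mult_signed_ppower_if_shifts: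
  assumes p: "prime p" and z: "signed_ppower p z" and "z dvd w" and x: "11 \<le> \<bar>x\<bar>"
    and shifts: "\<And>i. i \<in> {0, 1, 2, 3} \<Longrightarrow>
      (x + i) dvd (w + i * z) \<and> pdvd (int p) (x + i) (w + i * z)"
  shows "w = x * z"
proof (rule ccontr)
  assume "w \<noteq> x * z"
  have deviation: "\<exists>t. signed_ppower p t \<and> w - x * z = z * (t - 1) * (x + i)"
    if "i \<in> {0, 1, 2, 3}" and "\<not> int p dvd x + i" for i
    using shifted_product_deviation[OF p z \<open>z dvd w\<close> _ that(2)] shifts[OF that(1)] x that(1)
    by auto
  obtain i where i: "i \<in> {0, 1}" "\<not> int p dvd x + i"
    using not_dvd_consecutive[OF p, of x] by (metis add.right_neutral insertCI)
  obtain i' where i': "i' \<in> {2, 3}" "\<not> int p dvd x + i'"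
    using not_dvd_consecutive[OF p, of "x + 2"] by (auto simp: add.assoc)
  have "i \<in> {0, 1, 2, 3}" "i' \<in> {0, 1, 2, 3}"
    using i(1) i'(1) by auto
  then obtain t t' where t: "signed_ppower p t" "w - x * z = z * (t - 1) * (x + i)"
    and t': "signed_ppower p t'" "w - x * z = z * (t' - 1) * (x + i')"
    using deviation i(2) i'(2) by meson
  have eq: "(t - 1) * (x + i) = (t' - 1) * (x + i')"
    using t(2) t'(2) signed_ppower_nonzero[OF p z] by simp
  have "t \<noteq> 1"
    using t(2) \<open>w \<noteq> x * z\<close> by auto
  moreover have "i < i'"
    using i(1) i'(1) by auto
  ultimately have "t \<noteq> t'"
  proof (intro notI)
    assume "t = t'"
    then have "(t - 1) * (i' - i) = 0"
      using eq by (simp add: algebra_simps)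
    then show False
      using \<open>t \<noteq> 1\<close> \<open>i < i'\<close> by simp
  qed
  have "(t - t') * (x + i) = (t - 1) * (x + i) - (t' - 1) * (x + i)"
    by (simp add: algebra_simps)
  also have "\<dots> = (t' - 1) * (i' - i)"
    unfolding eq by (simp add: algebra_simps)
  finally have "\<bar>t - t'\<bar> * \<bar>x + i\<bar> = \<bar>t' - 1\<bar> * \<bar>i' - i\<bar>"
    by (simp only: abs_mult[symmetric])
  also have "\<dots> \<le> \<bar>t' - 1\<bar> * 3"
    using i(1) i'(1) by (intro mult_left_mono) auto
  also have "\<dots> \<le> \<bar>t - t'\<bar> * 9"
    using signed_ppower_dist[OF p t(1) t'(1) \<open>t \<noteq> t'\<close>] by simp
  finally have "\<bar>x + i\<bar> \<le> 9"
    using \<open>t \<noteq> t'\<close> by simp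
  then show False
    using x i(1) by auto
qed

section \<open>Multiplication in D_p\<close>

fun nat_tm :: "nat \<Rightarrow> tm" where
  "nat_tm 0 = Zero"
| "nat_tm (Suc n) = Plus (nat_tm n) One"

fun scale_tm :: "nat \<Rightarrow> tm \<Rightarrow> tm" where
  "scale_tm 0 t = Zero"
| "scale_tm (Suc n) t = Plus (scale_tm n t) t"

lemma eval_nat_tm [simp]: "eval_tm (e :: nat \<Rightarrow> int) (nat_tm n) = int n"
  by (induct n) auto

lemma eval_scale_tm [simp]: "eval_tm (e :: nat \<Rightarrow> int) (scale_tm n t) = int n * eval_tm e t"
  by (induct n) (auto simp: algebra_simps)

text \<open>If \<bar>x\<bar> < 11, the shifts 22, \<dots>, 25 let eq_mult_signed_ppower_if_shifts apply to x + 22.\<close>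
definition shifts_D :: "nat list" where
  "shifts_D = [0, 1, 2, 3, 22, 23, 24, 25]"

definition times_power_D :: "nat \<Rightarrow> int \<Rightarrow> int \<Rightarrow> int \<Rightarrow> bool" where
  "times_power_D p x z w \<longleftrightarrow> z dvd w \<and>
     (\<forall>c\<in>set shifts_D. (x + int c) dvd (w + int c * z) \<and> pdvd (int p) (x + int c) (w + int c * z))"

lemma times_power_D_iff:
  assumes p: "prime p" and z: "signed_ppower p z"
  shows "times_power_D p x z w \<longleftrightarrow> w = x * z"
proof
  assume h: "times_power_D p x z w"
  have shift: "(x + int c) dvd (w + int c * z) \<and> pdvd (int p) (x + int c) (w + int c * z)"
    if "c \<in> set shifts_D" for c
    using h that unfolding times_power_D_def by blast
  show "w = x * z"
  proof (cases "11 \<le> \<bar>x\<bar>")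
    case True
    show ?thesis
    proof (rule eq_mult_signed_ppower_if_shifts[OF p z _ True])
      show "z dvd w"
        using h unfolding times_power_D_def by blast
      fix i :: int
      assume "i \<in> {0, 1, 2, 3}"
      then show "(x + i) dvd (w + i * z) \<and> pdvd (int p) (x + i) (w + i * z)"
        using shift[of "nat i"] by (auto simp: shifts_D_def)
    qed
  next
    case False
    have "w + 22 * z = (x + 22) * z"
    proof (rule eq_mult_signed_ppower_if_shifts[OF p z])
      show "z dvd w + 22 * z" "11 \<le> \<bar>x + 22\<bar>"
        using h False unfolding times_power_D_def by auto
      fix i :: int
      assume "i \<in> {0, 1, 2, 3}"
      then show "(x + 22 + i) dvd (w + 22 * z + i * z) \<and>
          pdvd (int p) (x + 22 + i) (w + 22 * z + i * z)"
        using shift[of "nat (22 + i)"] by (auto simp: shifts_D_def algebra_simps)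
    qed
    then show ?thesis
      by (simp add: algebra_simps)
  qed
next
  assume w: "w = x * z"
  obtain k where k: "\<bar>z\<bar> = int p ^ k"
    using z unfolding signed_ppower_def by blast
  have "pdvd (int p) (x + int c) ((x + int c) * z)" for c
    unfolding pdvd_iff_abs using k by (intro exI[of _ k] disjI1) (simp add: abs_mult)
  moreover have "(x + int c) dvd ((x + int c) * z)" for c
    by simp
  ultimately show "times_power_D p x z w"
    unfolding times_power_D_def w by (simp add: algebra_simps)
qed

definition times_power_fm_D :: "tm \<Rightarrow> tm \<Rightarrow> tm \<Rightarrow> fm" where
  "times_power_fm_D x z w = conjs (Atom (Divides z w) # concat (map (\<lambda>c.
     [Atom (Divides (Plus x (nat_tm c)) (Plus w (scale_tm c z))),
      Atom (RelR (Plus x (nat_tm c)) (Plus w (scale_tm c z)))]) shifts_D))"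

lemma sat_times_power_fm_D [simp]:
  "sat (pdvd (int p)) P (dvd) T e (times_power_fm_D x z w) \<longleftrightarrow>
     times_power_D p (eval_tm e x) (eval_tm e z) (eval_tm e w)"
  unfolding times_power_fm_D_def times_power_D_def by auto

lemma syms_times_power_fm_D [simp]: "syms (times_power_fm_D x z w) = {SDvd, SR}"
  unfolding times_power_fm_D_def shifts_D_def by auto

lemma exists_power_cong_one:
  assumes p: "prime p" and "n \<noteq> 0" and "\<not> int p dvd n"
  shows "\<exists>j. 1 \<le> j \<and> n dvd int p ^ j - 1"
proof -
  have "coprime p (nat \<bar>n\<bar>)"
    using assms(3) p by (simp add: prime_imp_coprime flip: int_dvd_int_iff)
  then have "[p ^ totient (nat \<bar>n\<bar>) = 1] (mod nat \<bar>n\<bar>)"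
    by (rule euler_theorem)
  then have "int (nat \<bar>n\<bar>) dvd int p ^ totient (nat \<bar>n\<bar>) - 1"
    by (simp add: cong_iff_dvd_diff flip: cong_int_iff)
  moreover have "1 \<le> totient (nat \<bar>n\<bar>)"
    using assms(2) by (simp add: Suc_le_eq)
  ultimately show ?thesis
    by auto
qed

lemma exists_dvd_ppower_mult_power_minus_one:
  assumes p: "prime p" and "L \<noteq> 0"
  shows "\<exists>j e. 1 \<le> j \<and> 1 \<le> e \<and> L dvd int p ^ e * (int p ^ j - 1)"
proof -
  have "\<not> is_unit (int p)"
    using p by (simp add: prime_nat_iff)
  then obtain a n where n: "L = int p ^ a * n" "\<not> int p dvd n"
    using multiplicity_decompose'[OF assms(2)] by metis
  then have "n \<noteq> 0"
    by auto
  then obtain j where "1 \<le> j" "n dvd int p ^ j - 1"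
    using exists_power_cong_one[OF p _ n(2)] by blast
  moreover have "int p ^ a dvd int p ^ (a + 1)"
    by (simp add: le_imp_power_dvd)
  ultimately have "L dvd int p ^ (a + 1) * (int p ^ j - 1)"
    unfolding n(1) by (intro mult_dvd_mono)
  then show ?thesis
    using \<open>1 \<le> j\<close> by fastforce
qed

text \<open>From H = u v, A = (v - 1)^2 and K = A u^2 we get K = G^2 for G = u (v - 1) \<noteq> 0; as x, y, w
  divide G (or vanish) and 2 K + 1 divides z - 1, the congruence w \<equiv> x y (mod z - 1) is an
  equality.\<close>
definition mult_body_D :: fm where
  "mult_body_D =
    (let x = Var 0; y = Var 1; w = Var 2; v = Var 3; u = Var 4; H = Var 5; G = Var 6;
         v2 = Var 7; u2 = Var 8; A = Var 9; K = Var 10; z = Var 11; z' = Var 12; W = Var 13;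
         R = Var 14; U = Var 15; t = Var 16; V = Var 17; Q = Var 18; Qz = Var 19; xW = Var 20;
         V' = Var 21; s = Var 22; M = times_power_fm_D;
         bounded_by = (\<lambda>a b. Disj (Atom (Eq a Zero)) (Atom (Divides a b)))
     in conjs
         [Atom (RelR v One), Atom (PredT v), Atom (RelR u One), Atom (PredT u),
          M u v H, Atom (Eq (Plus G u) H), M v v v2, M u u u2,
          Atom (Eq (Plus (Plus A v) v) (Plus v2 One)), M A u2 K,
          Atom (RelR z One), Atom (PredT z), Atom (Eq (Plus z' One) z),
          Atom (Divides (Plus (Plus K K) One) z'),
          bounded_by x G, bounded_by y G, bounded_by w G,
          Atom (RelR W One), M R z U, Atom (Eq (Plus U One) (Plus R W)),
          Atom (Eq R (Plus y V)), M t z (Plus V t),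
          M Q z Qz, M x W xW, Atom (Eq (Plus Qz x) (Plus Q xW)),
          Atom (Eq Q (Plus w V')), M s z (Plus V' s)])"

definition mult_fm_D :: fm where
  "mult_fm_D = Ex 3 (Ex 4 (Ex 5 (Ex 6 (Ex 7 (Ex 8 (Ex 9 (Ex 10 (Ex 11 (Ex 12 (Ex 13 (Ex 14
     (Ex 15 (Ex 16 (Ex 17 (Ex 18 (Ex 19 (Ex 20 (Ex 21 (Ex 22 mult_body_D)))))))))))))))))))"

lemma sat_mult_body_D:
  "sat_D p (e(3 := v, 4 := u, 5 := H, 6 := G, 7 := v2, 8 := u2, 9 := A, 10 := K, 11 := z,
      12 := z', 13 := W, 14 := R, 15 := U, 16 := t, 17 := V, 18 := Q, 19 := Qz, 20 := xW,
      21 := V', 22 := s)) mult_body_D \<longleftrightarrow>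
     pdvd (int p) v 1 \<and> v \<notin> {-1, 0, 1} \<and> pdvd (int p) u 1 \<and> u \<notin> {-1, 0, 1} \<and>
     times_power_D p u v H \<and> G + u = H \<and> times_power_D p v v v2 \<and> times_power_D p u u u2 \<and>
     A + v + v = v2 + 1 \<and> times_power_D p A u2 K \<and>
     pdvd (int p) z 1 \<and> z \<notin> {-1, 0, 1} \<and> z' + 1 = z \<and> (K + K + 1) dvd z' \<and>
     (e 0 = 0 \<or> e 0 dvd G) \<and> (e 1 = 0 \<or> e 1 dvd G) \<and> (e 2 = 0 \<or> e 2 dvd G) \<and>
     pdvd (int p) W 1 \<and> times_power_D p R z U \<and> U + 1 = R + W \<and>
     R = e 1 + V \<and> times_power_D p t z (V + t) \<and>
     times_power_D p Q z Qz \<and> times_power_D p (e 0) W xW \<and> Qz + e 0 = Q + xW \<and>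
     Q = e 2 + V' \<and> times_power_D p s z (V' + s)"
  unfolding mult_body_D_def Let_def by (simp add: sat_D_def)

lemma sat_mult_fm_D:
  "sat_D p e mult_fm_D \<longleftrightarrow>
    (\<exists>v u H G v2 u2 A K z z' W R U t V Q Qz xW V' s.
     pdvd (int p) v 1 \<and> v \<notin> {-1, 0, 1} \<and> pdvd (int p) u 1 \<and> u \<notin> {-1, 0, 1} \<and>
     times_power_D p u v H \<and> G + u = H \<and> times_power_D p v v v2 \<and> times_power_D p u u u2 \<and>
     A + v + v = v2 + 1 \<and> times_power_D p A u2 K \<and>
     pdvd (int p) z 1 \<and> z \<notin> {-1, 0, 1} \<and> z' + 1 = z \<and> (K + K + 1) dvd z' \<and>
     (e 0 = 0 \<or> e 0 dvd G) \<and> (e 1 = 0 \<or> e 1 dvd G) \<and> (e 2 = 0 \<or> e 2 dvd G) \<and>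
     pdvd (int p) W 1 \<and> times_power_D p R z U \<and> U + 1 = R + W \<and>
     R = e 1 + V \<and> times_power_D p t z (V + t) \<and>
     times_power_D p Q z Qz \<and> times_power_D p (e 0) W xW \<and> Qz + e 0 = Q + xW \<and>
     Q = e 2 + V' \<and> times_power_D p s z (V' + s))"
  unfolding mult_fm_D_def by (simp only: sat_D_def sat.simps sat_mult_body_D[unfolded sat_D_def])

lemma syms_mult_fm_D: "syms mult_fm_D \<subseteq> {SDvd, SR, ST}"
  unfolding mult_fm_D_def mult_body_D_def Let_def
  by (simp only: syms.simps syms_conjs syms_times_power_fm_D atom_syms.simps list.set) auto

lemma mult_fm_D_sound:
  assumes p: "prime p" and sat: "sat_D p e mult_fm_D"
  shows "e 2 = e 0 * e 1"
proof -
  define x y w where "x = e 0" and "y = e 1" and "w = e 2"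
  obtain v u H G v2 u2 A K z z' W R U t V Q Qz xW V' s
    where v: "pdvd (int p) v 1" "v \<notin> {-1, 0, 1}" and u: "pdvd (int p) u 1"
      and G: "times_power_D p u v H" "G + u = H"
      and A: "times_power_D p v v v2" "times_power_D p u u u2" "A + v + v = v2 + 1"
      and K: "times_power_D p A u2 K"
      and z: "pdvd (int p) z 1" "z \<notin> {-1, 0, 1}" "z' + 1 = z" "(K + K + 1) dvd z'"
      and bounds: "x = 0 \<or> x dvd G" "y = 0 \<or> y dvd G" "w = 0 \<or> w dvd G"
      and W: "pdvd (int p) W 1" and U: "times_power_D p R z U" "U + 1 = R + W"
      and V: "R = y + V" "times_power_D p t z (V + t)"
      and Q: "times_power_D p Q z Qz" "times_power_D p x W xW" "Qz + x = Q + xW"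
      and V': "Q = w + V'" "times_power_D p s z (V' + s)"
    using sat unfolding sat_mult_fm_D x_def y_def w_def by blast
  have pp: "signed_ppower p v" "signed_ppower p u" "signed_ppower p z" "signed_ppower p W"
    using v(1) u z(1) W pdvd_one_iff[OF p] by blast+
  have "G = u * (v - 1)" "A = (v - 1) * (v - 1)"
    using G A(1,3) times_power_D_iff[OF p pp(1)] by (simp_all add: algebra_simps)
  moreover have "K = A * (u * u)"
    using K A(2) times_power_D_iff[OF p pp(2)] times_power_D_iff[OF p signed_ppower_mult[OF pp(2,2)]]
    by simp
  ultimately have "K = G * G"
    by (simp only: mult_ac)
  have "G \<noteq> 0"
    using \<open>G = u * (v - 1)\<close> v(2) signed_ppower_nonzero[OF p pp(2)] by simp
  then have small: "\<bar>x\<bar> \<le> \<bar>G\<bar>" "\<bar>y\<bar> \<le> \<bar>G\<bar>" "\<bar>w\<bar> \<le> \<bar>G\<bar>"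
    using bounds dvd_imp_le_int by auto
  have "z' \<noteq> 0"
    using z(2,3) by auto
  then have "2 * (G * G) + 1 \<le> \<bar>z - 1\<bar>"
    using dvd_imp_le_int[OF _ z(4)] z(3) \<open>K = G * G\<close> by (simp add: abs_mult_self_eq)
  have "R * z + 1 = R + W" "Q * z + x = Q + x * W" "V + t = t * z" "V' + s = s * z"
    using U Q V(2) V'(2) times_power_D_iff[OF p pp(3)] times_power_D_iff[OF p pp(4)] by auto
  then have "(z - 1) dvd (w - x * y)"
    using z(2) V(1) V'(1)
    by (intro product_cong_from_geometric[where R = R and W = W and Q = Q and V = V and t = t
          and V' = V' and s = s]) auto
  moreover have "\<bar>w - x * y\<bar> \<le> \<bar>G\<bar> + \<bar>G\<bar> * \<bar>G\<bar>"
    using small abs_triangle_ineq4[of w "x * y"] mult_mono[OF small(1,2)] by (simp add: abs_mult)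
  moreover have "\<bar>G\<bar> \<le> \<bar>G\<bar> * \<bar>G\<bar>"
    using mult_left_mono[of 1 "\<bar>G\<bar>" "\<bar>G\<bar>"] \<open>G \<noteq> 0\<close> by simp
  ultimately have "w = x * y"
    using \<open>2 * (G * G) + 1 \<le> \<bar>z - 1\<bar>\<close>
    by (intro dvd_diff_abs_less_imp_eq[of "\<bar>z - 1\<bar>"]) (simp_all add: abs_mult_self_eq)
  then show ?thesis
    unfolding x_def y_def w_def .
qed

lemma mult_fm_D_complete:
  assumes p: "prime p" and e: "e 2 = e 0 * e 1"
  shows "sat_D p e mult_fm_D"
proof -
  define x y where "x = e 0" and "y = e 1"
  define L where "L = (if x = 0 then 1 else x) * (if y = 0 then 1 else y)"
  have "L \<noteq> 0"
    unfolding L_def by simp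
  then obtain j k where jk: "1 \<le> j" "1 \<le> k" "L dvd int p ^ k * (int p ^ j - 1)"
    using exists_dvd_ppower_mult_power_minus_one[OF p] by blast
  define v u where "v = int p ^ j" and "u = int p ^ k"
  define G where "G = u * (v - 1)"
  have "L dvd G"
    using jk(3) unfolding G_def u_def v_def .
  moreover have "x = 0 \<or> x dvd L" "y = 0 \<or> y dvd L" "x * y = 0 \<or> x * y dvd L"
    unfolding L_def by auto
  ultimately have bounds: "x = 0 \<or> x dvd G" "y = 0 \<or> y dvd G" "x * y = 0 \<or> x * y dvd G"
    using dvd_trans by blast+
  have p2: "2 \<le> int p"
    using prime_ge_2_nat[OF p] by simp
  have "2 \<le> v" "2 \<le> u"
    unfolding v_def u_def using jk(1,2) p2 by (auto intro: order.trans[OF _ self_le_power])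
  have "int p dvd G"
    unfolding G_def u_def using jk(2) by (simp add: dvd_power)
  then have "\<not> int p dvd 2 * (G * G) + 1"
    using not_dvd_consecutive[OF p, of "2 * (G * G)"] by simp
  moreover have "2 * (G * G) + 1 \<noteq> 0"
    using zero_le_square[of G] by linarith
  ultimately obtain l where l: "1 \<le> l" "(2 * (G * G) + 1) dvd int p ^ l - 1"
    using exists_power_cong_one[OF p] by blast
  define z where "z = int p ^ l"
  have "2 \<le> z"
    unfolding z_def using l(1) p2 by (auto intro: order.trans[OF _ self_le_power])
  define n where "n = nat (y + \<bar>y\<bar> * (z - 1))"
  have "\<bar>y\<bar> \<le> \<bar>y\<bar> * (z - 1)"
    using \<open>2 \<le> z\<close> mult_left_mono[of 1 "z - 1" "\<bar>y\<bar>"] by simp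
  then have n: "int n = y + \<bar>y\<bar> * (z - 1)"
    unfolding n_def by simp
  define W where "W = z ^ n"
  obtain R V0 t0 where geo: "R * z + 1 = R + W" "R = int n + V0" "V0 + t0 = t0 * z"
    using geometric_sum_witness[of z n] \<open>2 \<le> z\<close> unfolding W_def by auto
  define V t where "V = R - y" and "t = t0 + \<bar>y\<bar>"
  have "V + t = t * z"
    unfolding V_def t_def using geo(2,3) n by (simp add: algebra_simps)
  have pp: "signed_ppower p v" "signed_ppower p u" "signed_ppower p (u * u)" "signed_ppower p z"
      "signed_ppower p W"
    unfolding v_def u_def z_def W_def by (simp_all flip: power_add power_mult)
  have "x * R * z + x = x * R + x * W"
    using arg_cong[OF geo(1), of "\<lambda>n. x * n"] by (simp add: algebra_simps)
  moreover have "x * V + x * t = x * t * z"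
    using arg_cong[OF \<open>V + t = t * z\<close>, of "\<lambda>n. x * n"] by (simp add: algebra_simps)
  moreover have "(G * G + G * G + 1) dvd (z - 1)"
    using l(2) unfolding z_def by (simp add: algebra_simps)
  ultimately have "pdvd (int p) v 1 \<and> v \<notin> {-1, 0, 1} \<and> pdvd (int p) u 1 \<and> u \<notin> {-1, 0, 1} \<and>
     times_power_D p u v (u * v) \<and> G + u = u * v \<and> times_power_D p v v (v * v) \<and>
     times_power_D p u u (u * u) \<and> (v - 1) * (v - 1) + v + v = v * v + 1 \<and>
     times_power_D p ((v - 1) * (v - 1)) (u * u) (G * G) \<and>
     pdvd (int p) z 1 \<and> z \<notin> {-1, 0, 1} \<and> (z - 1) + 1 = z \<and> (G * G + G * G + 1) dvd (z - 1) \<and>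
     (x = 0 \<or> x dvd G) \<and> (y = 0 \<or> y dvd G) \<and> (x * y = 0 \<or> x * y dvd G) \<and>
     pdvd (int p) W 1 \<and> times_power_D p R z (R * z) \<and> R * z + 1 = R + W \<and>
     R = y + V \<and> times_power_D p t z (V + t) \<and>
     times_power_D p (x * R) z (x * R * z) \<and> times_power_D p x W (x * W) \<and>
     x * R * z + x = x * R + x * W \<and>
     x * R = x * y + x * V \<and> times_power_D p (x * t) z (x * V + x * t)"
    using bounds geo(1) \<open>V + t = t * z\<close> \<open>2 \<le> v\<close> \<open>2 \<le> u\<close> \<open>2 \<le> z\<close>
    by (simp add: pdvd_one_iff[OF p] pp times_power_D_iff[OF p] G_def V_def algebra_simps)
  then show ?thesis
    unfolding sat_mult_fm_D e x_def[symmetric] y_def[symmetric] by blast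
qed

theorem theorem1p13:
  shows "(\<exists>\<mu>. syms \<mu> \<subseteq> {SR} \<and>
           (\<forall>p::nat. prime p \<longrightarrow> (\<forall>e. sat_N p e \<mu> \<longleftrightarrow> e 2 = e 0 * e 1)))
       \<and> (\<exists>\<mu>. syms \<mu> \<subseteq> {SPos, SR} \<and>
           (\<forall>p::nat. prime p \<longrightarrow> (\<forall>e. sat_Z p e \<mu> \<longleftrightarrow> e 2 = e 0 * e 1)))
       \<and> (\<exists>\<mu>. syms \<mu> \<subseteq> {SDvd, SR, ST} \<and>
           (\<forall>p::nat. prime p \<longrightarrow> (\<forall>e. sat_D p e \<mu> \<longleftrightarrow> e 2 = e 0 * e 1)))"
proof -
  have "syms mult_fm_N \<subseteq> {SR} \<and>
      (\<forall>p. prime p \<longrightarrow> (\<forall>e. sat_N p e mult_fm_N \<longleftrightarrow> e 2 = e 0 * e 1))"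
    using syms_mult_fm_N mult_fm_N_sound mult_fm_N_complete by blast
  moreover have "syms mult_fm_Z \<subseteq> {SPos, SR} \<and>
      (\<forall>p. prime p \<longrightarrow> (\<forall>e. sat_Z p e mult_fm_Z \<longleftrightarrow> e 2 = e 0 * e 1))"
    using syms_mult_fm_Z mult_fm_Z_correct by blast
  moreover have "syms mult_fm_D \<subseteq> {SDvd, SR, ST} \<and>
      (\<forall>p. prime p \<longrightarrow> (\<forall>e. sat_D p e mult_fm_D \<longleftrightarrow> e 2 = e 0 * e 1))"
    using syms_mult_fm_D mult_fm_D_sound mult_fm_D_complete by blast
  ultimately show ?thesis
    by blast
qed

end
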